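(* Let $\mathcal{A}=\{1,\dots,K\}$ with $K\ge2$, $a^*\in\mathcal{A}$, $\sigma>0$, and for each $a\in\mathcal{A}$ let $m_a\ge1$ and $\vec{y}_a\in\mathbb{R}^{m_a}$. For $\vec{\epsilon}_a\in\mathbb{R}^{m_a}$ let $\tilde{\mu}_a=(\vec{y}_a+\vec{\epsilon}_a)^T\mathbf{1}/m_a$. Given any $\delta>0$, consider $$P_3:\ \min_{\{\vec{\epsilon}_a\}}\sum_{a\in\mathcal{A}}\|\vec{\epsilon}_a\|_2^2\ \ \text{s.t.}\ \ \sum_{a\neq a^*}\Phi\!\left(\frac{\tilde{\mu}_a-\tilde{\mu}_{a^*}}{\sigma^3\sqrt{1/m_a+1/m_{a^*}}}\right)\le\delta,\ \ \tilde{\mu}_a-\tilde{\mu}_{a^*}\le0\ \forall a\neq a^*.$$ Then $P_3$ is a quadratic program with convex constraints and, for every reward instance $\{\vec{y}_a\}_{a\in\mathcal{A}}$, it has at least one optimal solution. Moreover, poisoning with such a solution is a feasible offline attack on Thompson Sampling for Gaussian distributions: after the attack, the algorithm pulls $a^*$ at round $T+1$ with probability at least $1-\delta$.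
   Context: Offline attack setting: a bandit algorithm pulls arms $a_1,\dots,a_T$ and receives rewards $r_t=\mu_{a_t}+\eta_t$ with $\eta_t$ i.i.d. $\mathcal{N}(0,\sigma^2)$; $m_a$ is the number of rounds $t\le T$ with $a_t=a$, $\vec{y}_a=(r_t:a_t=a)^T$, and the attacker replaces these rewards by $\vec{y}_a+\vec{\epsilon}_a$ before the algorithm updates, so $\tilde{\mu}_a$ is the post-attack empirical mean. $\Phi$ is the standard normal CDF and $\mathbf{1}$ the all-ones vector. Thompson Sampling for Gaussian distributions (Jeffreys prior) at round $T+1$ independently samples $\theta_a\sim\mathcal{N}(\tilde{\mu}_a/\sigma^2,\sigma^2/m_a)$ for each arm and pulls $\arg\max_a\theta_a$. *)

theory Defs
  imports "HOL-Probability.Probability"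
begin

definition Phi :: "real \<Rightarrow> real" where
  "Phi x = measure (density lborel std_normal_density) {..x}"

text \<open>Arms are 1..K; reward vector of arm a is y a i for i < m a;
  perturbation vectors eps a i for i < m a (other indices irrelevant).\<close>

definition mu_tilde :: "(nat \<Rightarrow> nat) \<Rightarrow> (nat \<Rightarrow> nat \<Rightarrow> real) \<Rightarrow> (nat \<Rightarrow> nat \<Rightarrow> real) \<Rightarrow> nat \<Rightarrow> real" where
  "mu_tilde m y eps a = (\<Sum>i<m a. y a i + eps a i) / real (m a)"

definition P3_obj :: "nat \<Rightarrow> (nat \<Rightarrow> nat) \<Rightarrow> (nat \<Rightarrow> nat \<Rightarrow> real) \<Rightarrow> real" where
  "P3_obj K m eps = (\<Sum>a\<in>{1..K}. \<Sum>i<m a. (eps a i)\<^sup>2)"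

definition P3_feasible :: "nat \<Rightarrow> nat \<Rightarrow> real \<Rightarrow> real \<Rightarrow> (nat \<Rightarrow> nat) \<Rightarrow> (nat \<Rightarrow> nat \<Rightarrow> real)
    \<Rightarrow> (nat \<Rightarrow> nat \<Rightarrow> real) \<Rightarrow> bool" where
  "P3_feasible K astar \<sigma> \<delta> m y eps \<longleftrightarrow>
     (\<Sum>a\<in>{1..K} - {astar}.
        Phi ((mu_tilde m y eps a - mu_tilde m y eps astar)
             / (\<sigma> ^ 3 * sqrt (1 / real (m a) + 1 / real (m astar))))) \<le> \<delta>
   \<and> (\<forall>a\<in>{1..K} - {astar}. mu_tilde m y eps a - mu_tilde m y eps astar \<le> 0)"

definition P3_optimal :: "nat \<Rightarrow> nat \<Rightarrow> real \<Rightarrow> real \<Rightarrow> (nat \<Rightarrow> nat) \<Rightarrow> (nat \<Rightarrow> nat \<Rightarrow> real)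
    \<Rightarrow> (nat \<Rightarrow> nat \<Rightarrow> real) \<Rightarrow> bool" where
  "P3_optimal K astar \<sigma> \<delta> m y eps \<longleftrightarrow>
     P3_feasible K astar \<sigma> \<delta> m y eps \<and>
     (\<forall>eps'. P3_feasible K astar \<sigma> \<delta> m y eps' \<longrightarrow> P3_obj K m eps \<le> P3_obj K m eps')"

text \<open>Thompson sampling (Gaussian, Jeffreys prior) at round T+1 after the attack:
  independent samples theta_a ~ N(mu_tilde_a / sigma^2, sigma^2 / m_a) (variance).\<close>
definition TS_sample :: "nat \<Rightarrow> real \<Rightarrow> (nat \<Rightarrow> nat) \<Rightarrow> (nat \<Rightarrow> nat \<Rightarrow> real) \<Rightarrow> (nat \<Rightarrow> nat \<Rightarrow> real)
    \<Rightarrow> (nat \<Rightarrow> real) measure" where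
  "TS_sample K \<sigma> m y eps =
     PiM {1..K} (\<lambda>a. density lborel
        (normal_density (mu_tilde m y eps a / \<sigma>\<^sup>2) (sqrt (\<sigma>\<^sup>2 / real (m a)))))"

definition TS_pulls :: "nat \<Rightarrow> nat \<Rightarrow> (nat \<Rightarrow> real) set" where
  "TS_pulls K astar = {\<theta>. \<forall>a\<in>{1..K} - {astar}. \<theta> a < \<theta> astar}"

end

theory Submission
  imports Defs
begin

(* The argument of the a-th Phi-term is an affine function of the perturbation which the second
   family of constraints keeps nonpositive, and Phi is convex on the nonpositive half-line, where
   the normal density increases; hence the feasible set is convex, and the objective is a sum of
   squares. Raising all rewards of arm astar by L lowers every gap by L, so for large L all
   Phi-terms are small and the feasible set is nonempty. It is closed, and only the finitely many
   coordinates (a, i) with a in {1..K} and i < m a enter the problem; zeroing the others makes the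
   objective coercive, so it attains its minimum. Finally, under Thompson sampling
   theta a - theta astar is Gaussian with mean (mu a - mu astar) / sigma^2 and standard deviation
   sigma * sqrt (1 / m a + 1 / m astar), so the a-th Phi-term is exactly the probability that arm a
   beats arm astar, and the union bound shows that every feasible perturbation makes Thompson
   sampling pull astar with probability at least 1 - delta. *)

lemma real_distribution_std_normal: "real_distribution (density lborel std_normal_density)"
  by (auto simp: real_distribution_def real_distribution_axioms_def prob_space_normal_density)

lemma Phi_eq_cdf: "Phi = cdf (density lborel std_normal_density)"
  by (simp add: Phi_def cdf_def fun_eq_iff)

lemma continuous_on_std_normal_density: "continuous_on S std_normal_density"
  unfolding normal_density_def by (intro continuous_intros) auto

lemma Phi_diff_eq_integral:
  assumes "a < x"
  shows "Phi x - Phi a = integral {a..x} std_normal_density"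
proof -
  interpret real_distribution "density lborel std_normal_density"
    by (rule real_distribution_std_normal)
  have integral_closed: "(std_normal_density has_integral integral {a..x} std_normal_density) {a..x}"
    using integrable_continuous_interval[OF continuous_on_std_normal_density]
    by (simp add: integrable_integral)
  then have integral_half_open: "(std_normal_density has_integral integral {a..x} std_normal_density) {a<..x}"
    by (rule has_integral_spike_set_eq[THEN iffD1, rotated -1])
      (auto intro: negligible_subset[of "{a}"])
  have "emeasure (density lborel std_normal_density) {a<..x}
      = (\<integral>\<^sup>+ y. ennreal (std_normal_density y) * indicator {a<..x} y \<partial>lborel)"
    by (simp add: emeasure_density)
  also have "\<dots> = ennreal (integral {a..x} std_normal_density)"
    by (rule nn_integral_has_integral_lebesgue'[OF _ integral_half_open]) simp
  finally have "measure (density lborel std_normal_density) {a<..x} = integral {a..x} std_normal_density"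
    unfolding measure_def by (simp add: integral_nonneg[OF integral_closed[THEN has_integral_integrable]])
  then show ?thesis
    using cdf_diff_eq[OF assms] by (simp add: Phi_eq_cdf)
qed

lemma Phi_has_real_derivative: "(Phi has_real_derivative std_normal_density t) (at t)"
proof -
  let ?F = "\<lambda>x. Phi (t - 1) + integral {t - 1..x} std_normal_density"
  have "((\<lambda>x. integral {t - 1..x} std_normal_density) has_real_derivative std_normal_density t)
      (at t within {t - 1..t + 1})"
    by (rule integral_has_real_derivative[OF continuous_on_std_normal_density]) auto
  then have F: "(?F has_real_derivative std_normal_density t) (at t)"
    using at_within_interior[of t "{t - 1..t + 1}"] by (auto intro!: derivative_eq_intros)
  have F_eq: "?F x = Phi x" if "x \<in> {t - 1<..}" for x
    using Phi_diff_eq_integral[of "t - 1" x] that by simp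
  show ?thesis
    by (rule has_field_derivative_transform_within_open[OF F _ _ F_eq, where S = "{t - 1<..}"]) simp_all
qed

lemma continuous_on_Phi [continuous_intros]:
  assumes "continuous_on S f"
  shows "continuous_on S (\<lambda>x. Phi (f x))"
proof -
  have "continuous_on UNIV Phi"
    using Phi_has_real_derivative by (intro continuous_at_imp_continuous_on ballI DERIV_isCont)
  then show ?thesis
    using assms by (rule continuous_on_compose2) auto
qed

lemma std_normal_density_mono_nonpos:
  assumes "x \<le> y" "y \<le> 0"
  shows "std_normal_density x \<le> std_normal_density y"
proof -
  have "(- y)\<^sup>2 \<le> (- x)\<^sup>2"
    using assms by (intro power_mono) auto
  then have "exp (- x\<^sup>2 / 2) \<le> exp (- y\<^sup>2 / 2)"
    by simp
  then show ?thesis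
    unfolding std_normal_density_def by (intro mult_left_mono) auto
qed

lemma convex_on_Phi_nonpos: "convex_on {..0} Phi"
  by (rule convex_on_realI[OF _ Phi_has_real_derivative]) (auto intro: std_normal_density_mono_nonpos)

lemma Phi_tendsto_at_bot: "(Phi \<longlongrightarrow> 0) at_bot"
proof -
  interpret real_distribution "density lborel std_normal_density"
    by (rule real_distribution_std_normal)
  show ?thesis
    using cdf_lim_at_bot by (simp add: Phi_eq_cdf)
qed

lemma (in prob_space) prob_le_eq_Phi:
  assumes "distributed M lborel Z std_normal_density"
  shows "prob {\<omega>\<in>space M. Z \<omega> \<le> r} = Phi r"
proof -
  have Z: "Z \<in> measurable M lborel"
    using assms by (simp add: distributed_def)
  have "prob {\<omega>\<in>space M. Z \<omega> \<le> r} = prob (Z -` {..r} \<inter> space M)"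
    by (rule arg_cong[where f = prob]) auto
  also have "\<dots> = measure (distr M lborel Z) {..r}"
    by (rule measure_distr[symmetric, OF Z]) simp
  finally show ?thesis
    using distributed_distr_eq_density[OF assms] by (simp add: Phi_def)
qed

lemma indep_vars_PiM_components:
  assumes M: "\<And>i. i \<in> I \<Longrightarrow> prob_space (M i)" and "I \<noteq> {}"
  shows "prob_space.indep_vars (PiM I M) M (\<lambda>i \<omega>. \<omega> i) I"
proof -
  interpret prob_space "PiM I M"
    using M by (rule prob_space_PiM)
  have "distr (PiM I M) (PiM I M) (\<lambda>\<omega>. \<lambda>i\<in>I. \<omega> i) = distr (PiM I M) (PiM I M) (\<lambda>\<omega>. \<omega>)"
    by (rule distr_cong) (auto simp: space_PiM)
  also have "\<dots> = PiM I M"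
    by simp
  also have "\<dots> = PiM I (\<lambda>i. distr (PiM I M) (M i) (\<lambda>\<omega>. \<omega> i))"
    by (rule PiM_cong) (simp_all add: distr_PiM_component M)
  finally show ?thesis
    using \<open>I \<noteq> {}\<close> by (subst indep_vars_iff_distr_eq_PiM') simp_all
qed

lemma measure_PiM_normal_component_le:
  fixes I :: "'i set" and mu s :: "'i \<Rightarrow> real"
  defines "M \<equiv> PiM I (\<lambda>i. density lborel (normal_density (mu i) (s i)))"
  assumes s: "\<And>i. i \<in> I \<Longrightarrow> s i > 0" and a: "a \<in> I" and c: "c \<in> I" and "a \<noteq> c"
  shows "measure M {\<theta>\<in>space M. \<theta> c \<le> \<theta> a} = Phi ((mu a - mu c) / sqrt ((s a)\<^sup>2 + (s c)\<^sup>2))"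
proof -
  let ?N = "\<lambda>i. density lborel (normal_density (mu i) (s i))"
  have N: "prob_space (?N i)" if "i \<in> I" for i
    using s[OF that] by (rule prob_space_normal_density)
  interpret prob_space M
    unfolding M_def using N by (rule prob_space_PiM)
  have component_measurable: "(\<lambda>\<theta>. \<theta> i) \<in> borel_measurable M" if "i \<in> I" for i
    using measurable_component_singleton[OF that, of ?N] unfolding M_def by simp
  have component_normal: "distributed M lborel (\<lambda>\<theta>. \<theta> i) (normal_density (mu i) (s i))"
    if "i \<in> I" for i
  proof -
    have "distr M lborel (\<lambda>\<theta>. \<theta> i) = distr M (?N i) (\<lambda>\<theta>. \<theta> i)"
      by (rule distr_cong) auto
    also have "\<dots> = ?N i"
      unfolding M_def using N that by (rule distr_PiM_component)
    finally show ?thesis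
      using component_measurable[OF that] by (simp add: distributed_def)
  qed
  have sets_N: "sets (?N i) = sets borel" for i
    by simp
  have "indep_vars ?N (\<lambda>i \<theta>. \<theta> i) I"
    unfolding M_def using N a by (intro indep_vars_PiM_components) auto
  then have components_indep: "indep_vars (\<lambda>_. borel) (\<lambda>i \<theta>. \<theta> i) I"
    unfolding indep_vars_def by (simp add: measurable_cong_sets[OF refl sets_N])
  \<comment> \<open>two members of an independent family are independent, via a one-term sum\<close>
  have "indep_var borel (\<lambda>\<theta>. \<theta> c) borel (\<lambda>\<theta>. \<Sum>i\<in>{a}. \<theta> i)"
    by (rule indep_vars_sum) (auto intro: indep_vars_subset[OF components_indep] simp: a c \<open>a \<noteq> c\<close>[symmetric])
  then have indep_ca: "indep_var borel (\<lambda>\<theta>. \<theta> c) borel (\<lambda>\<theta>. \<theta> a)"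
    by simp
  have S: "sqrt ((s c)\<^sup>2 + (s a)\<^sup>2) > 0"
    using s[OF a] by (intro real_sqrt_gt_zero add_nonneg_pos) auto
  from diff_indep_normal[OF indep_ca s[OF c] s[OF a] component_normal[OF c] component_normal[OF a]]
  have standardized: "distributed M lborel
      (\<lambda>\<theta>. (\<theta> c - \<theta> a - (mu c - mu a)) / sqrt ((s c)\<^sup>2 + (s a)\<^sup>2)) std_normal_density"
    unfolding normal_standard_normal_convert[OF S] .
  have "measure M {\<theta>\<in>space M. \<theta> c \<le> \<theta> a} = measure M {\<theta>\<in>space M.
      (\<theta> c - \<theta> a - (mu c - mu a)) / sqrt ((s c)\<^sup>2 + (s a)\<^sup>2) \<le> (mu a - mu c) / sqrt ((s c)\<^sup>2 + (s a)\<^sup>2)}"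
    using S by (intro arg_cong[where f = "measure M"]) (auto simp: divide_simps)
  also have "\<dots> = Phi ((mu a - mu c) / sqrt ((s a)\<^sup>2 + (s c)\<^sup>2))"
    using prob_le_eq_Phi[OF standardized] by (simp add: add.commute)
  finally show ?thesis .
qed

lemma measure_PiM_normal_argmax_ge:
  fixes I :: "'i set" and mu s :: "'i \<Rightarrow> real"
  defines "M \<equiv> PiM I (\<lambda>i. density lborel (normal_density (mu i) (s i)))"
  assumes "finite I" and s: "\<And>i. i \<in> I \<Longrightarrow> s i > 0" and c: "c \<in> I"
  shows "prob_space M"
    and "1 - (\<Sum>a\<in>I - {c}. Phi ((mu a - mu c) / sqrt ((s a)\<^sup>2 + (s c)\<^sup>2)))
      \<le> measure M ({\<theta>. \<forall>a\<in>I - {c}. \<theta> a < \<theta> c} \<inter> space M)"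
proof -
  show "prob_space M"
    unfolding M_def using s by (intro prob_space_PiM prob_space_normal_density)
  then interpret prob_space M .
  define E where "E a = {\<theta>\<in>space M. \<theta> c \<le> \<theta> a}" for a
  have E: "E a \<in> events" if "a \<in> I" for a
    unfolding E_def M_def using that c by measurable
  have "{\<theta>. \<forall>a\<in>I - {c}. \<theta> a < \<theta> c} \<inter> space M = space M - (\<Union>a\<in>I - {c}. E a)"
    by (auto simp: E_def not_le) (meson DiffI leD singletonD)
  moreover have "prob (\<Union>a\<in>I - {c}. E a) \<le> (\<Sum>a\<in>I - {c}. prob (E a))"
    using \<open>finite I\<close> E by (intro finite_measure_subadditive_finite) auto
  moreover have "(\<Sum>a\<in>I - {c}. prob (E a))
      = (\<Sum>a\<in>I - {c}. Phi ((mu a - mu c) / sqrt ((s a)\<^sup>2 + (s c)\<^sup>2)))"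
    unfolding E_def M_def using s c by (intro sum.cong measure_PiM_normal_component_le) auto
  moreover have "(\<Union>a\<in>I - {c}. E a) \<in> events"
    using \<open>finite I\<close> E by auto
  ultimately show "1 - (\<Sum>a\<in>I - {c}. Phi ((mu a - mu c) / sqrt ((s a)\<^sup>2 + (s c)\<^sup>2)))
      \<le> prob ({\<theta>. \<forall>a\<in>I - {c}. \<theta> a < \<theta> c} \<inter> space M)"
    by (simp add: prob_compl)
qed

lemma continuous_on_apply2 [continuous_intros]:
  "continuous_on S (\<lambda>e :: 'a \<Rightarrow> 'b \<Rightarrow> 'c::topological_space. e a i)"
proof -
  have "continuous_on UNIV (\<lambda>e :: 'a \<Rightarrow> 'b \<Rightarrow> 'c. e a)"
    by simp
  then have "continuous_on UNIV (\<lambda>e :: 'a \<Rightarrow> 'b \<Rightarrow> 'c. e a i)"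
    by (rule continuous_on_product_then_coordinatewise)
  then show ?thesis
    by (rule continuous_on_subset) simp
qed

lemma compact_PiE_UNIV:
  assumes "\<And>i. compact (S i)"
  shows "compact (PiE UNIV S :: ('a \<Rightarrow> 'b::topological_space) set)"
proof -
  have "compactin (product_topology (\<lambda>_. euclidean) UNIV) (PiE UNIV S)"
    by (simp add: compactin_PiE assms)
  then show ?thesis
    by (simp add: euclidean_product_topology)
qed

lemma sum_squares_attains_min:
  fixes S :: "('a \<Rightarrow> 'b \<Rightarrow> real) set"
  assumes "closed S" "S \<noteq> {}" "finite D"
    and support: "\<And>e a i. e \<in> S \<Longrightarrow> (a, i) \<notin> D \<Longrightarrow> e a i = 0"
  shows "\<exists>e\<in>S. \<forall>e'\<in>S. (\<Sum>(a, i)\<in>D. (e a i)\<^sup>2) \<le> (\<Sum>(a, i)\<in>D. (e' a i)\<^sup>2)"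
proof -
  let ?f = "\<lambda>e :: 'a \<Rightarrow> 'b \<Rightarrow> real. \<Sum>(a, i)\<in>D. (e a i)\<^sup>2"
  have continuous_f: "continuous_on A ?f" for A
    unfolding split_beta by (intro continuous_on_sum continuous_on_power continuous_on_apply2)
  obtain e0 where "e0 \<in> S"
    using \<open>S \<noteq> {}\<close> by blast
  define R where "R = sqrt (?f e0)"
  define B :: "('a \<Rightarrow> 'b \<Rightarrow> real) set"
    where "B = PiE UNIV (\<lambda>a. PiE UNIV (\<lambda>i. if (a, i) \<in> D then {-R..R} else {0}))"
  let ?S = "S \<inter> {e. ?f e \<le> ?f e0}"
  have "?S \<subseteq> B"
  proof
    fix e assume e: "e \<in> ?S"
    have "e a i \<in> (if (a, i) \<in> D then {-R..R} else {0})" for a i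
    proof (cases "(a, i) \<in> D")
      case True
      have "(\<lambda>(a, i). (e a i)\<^sup>2) (a, i) \<le> ?f e"
        by (rule member_le_sum[OF True]) (auto simp: \<open>finite D\<close>)
      then have "\<bar>e a i\<bar> \<le> R"
        using e unfolding R_def by (simp add: real_le_rsqrt)
      then show ?thesis
        using True by auto
    qed (use e support in auto)
    then show "e \<in> B"
      unfolding B_def by auto
  qed
  moreover have "compact B"
    unfolding B_def by (intro compact_PiE_UNIV) auto
  moreover have "closed ?S"
    using \<open>closed S\<close> by (intro closed_Int closed_Collect_le continuous_f continuous_on_const)
  ultimately have compact: "compact ?S"
    using compact_Int_closed[of B ?S] by (simp add: Int_absorb1)
  have nonempty: "?S \<noteq> {}"
    using \<open>e0 \<in> S\<close> by blast
  obtain e where e: "e \<in> ?S" and min: "\<And>e'. e' \<in> ?S \<Longrightarrow> ?f e \<le> ?f e'"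
    using continuous_attains_inf[OF compact nonempty continuous_f] by auto
  have "?f e \<le> ?f e'" if "e' \<in> S" for e'
  proof (cases "?f e' \<le> ?f e0")
    case True
    with that have "e' \<in> ?S"
      by blast
    then show ?thesis
      by (rule min)
  next
    case False
    moreover have "?f e \<le> ?f e0"
      using e by blast
    ultimately show ?thesis
      by linarith
  qed
  then show ?thesis
    using e by blast
qed

lemma mu_tilde_convex_comb:
  "mu_tilde m y (\<lambda>a i. t * e1 a i + (1 - t) * e2 a i) a
     = t * mu_tilde m y e1 a + (1 - t) * mu_tilde m y e2 a"
proof -
  have "(\<Sum>i<m a. y a i + (t * e1 a i + (1 - t) * e2 a i))
      = t * (\<Sum>i<m a. y a i + e1 a i) + (1 - t) * (\<Sum>i<m a. y a i + e2 a i)"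
    unfolding sum_distrib_left sum.distrib[symmetric] by (rule sum.cong) (simp_all add: algebra_simps)
  then show ?thesis
    unfolding mu_tilde_def by (simp add: add_divide_distrib)
qed

lemma mu_tilde_shift:
  assumes "m a > 0"
  shows "mu_tilde m y (\<lambda>b i. eps b i + c b) a = mu_tilde m y eps a + c a"
  using assms by (simp add: mu_tilde_def sum.distrib add.assoc add_divide_distrib)

lemma P3_scale_pos:
  assumes "\<sigma> > 0" and "m astar > 0"
  shows "\<sigma> ^ 3 * sqrt (1 / real (m a) + 1 / real (m astar)) > 0"
  using assms by (intro mult_pos_pos zero_less_power real_sqrt_gt_zero add_nonneg_pos) auto

lemma P3_feasible_convex:
  assumes "\<sigma> > 0" and "m astar > 0"
    and feasible1: "P3_feasible K astar \<sigma> \<delta> m y e1" and feasible2: "P3_feasible K astar \<sigma> \<delta> m y e2"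
    and t: "0 \<le> t" "t \<le> 1"
  shows "P3_feasible K astar \<sigma> \<delta> m y (\<lambda>a i. t * e1 a i + (1 - t) * e2 a i)"
proof -
  let ?e = "\<lambda>a i. t * e1 a i + (1 - t) * e2 a i"
  let ?A = "{1..K} - {astar}"
  let ?c = "\<lambda>a. \<sigma> ^ 3 * sqrt (1 / real (m a) + 1 / real (m astar))"
  let ?gap = "\<lambda>e a. mu_tilde m y e a - mu_tilde m y e astar"
  have gap_comb: "?gap ?e a = t * ?gap e1 a + (1 - t) * ?gap e2 a" for a
    by (simp only: mu_tilde_convex_comb) (simp add: algebra_simps)
  have gap1: "?gap e1 a \<le> 0" and gap2: "?gap e2 a \<le> 0" if "a \<in> ?A" for a
    using feasible1 feasible2 that unfolding P3_feasible_def by auto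
  have gap_comb_nonpos: "?gap ?e a \<le> 0" if "a \<in> ?A" for a
    using gap1[OF that] gap2[OF that] t unfolding gap_comb
    by (simp add: add_nonpos_nonpos mult_nonneg_nonpos)
  have Phi_comb: "Phi (?gap ?e a / ?c a) \<le> t * Phi (?gap e1 a / ?c a) + (1 - t) * Phi (?gap e2 a / ?c a)"
    if "a \<in> ?A" for a
  proof -
    have c: "?c a > 0"
      using assms(1,2) by (rule P3_scale_pos)
    have "?gap e1 a / ?c a \<in> {..0}" "?gap e2 a / ?c a \<in> {..0}"
      using gap1[OF that] gap2[OF that] c by (simp_all add: divide_nonpos_pos)
    from convex_onD[OF convex_on_Phi_nonpos _ _ this, of "1 - t"] t
    show ?thesis
      by (simp add: gap_comb add_divide_distrib)
  qed
  have "(\<Sum>a\<in>?A. Phi (?gap ?e a / ?c a))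
      \<le> (\<Sum>a\<in>?A. t * Phi (?gap e1 a / ?c a) + (1 - t) * Phi (?gap e2 a / ?c a))"
    by (rule sum_mono) (rule Phi_comb)
  also have "\<dots> = t * (\<Sum>a\<in>?A. Phi (?gap e1 a / ?c a)) + (1 - t) * (\<Sum>a\<in>?A. Phi (?gap e2 a / ?c a))"
    by (simp add: sum.distrib sum_distrib_left)
  also have "\<dots> \<le> t * \<delta> + (1 - t) * \<delta>"
    using feasible1 feasible2 t unfolding P3_feasible_def by (intro add_mono mult_left_mono) auto
  finally show ?thesis
    using gap_comb_nonpos unfolding P3_feasible_def by (simp add: algebra_simps)
qed

lemma P3_obj_convex:
  assumes t: "0 \<le> t" "t \<le> 1"
  shows "P3_obj K m (\<lambda>a i. t * e1 a i + (1 - t) * e2 a i) \<le> t * P3_obj K m e1 + (1 - t) * P3_obj K m e2"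
proof -
  have square_comb: "(t * u + (1 - t) * v)\<^sup>2 \<le> t * u\<^sup>2 + (1 - t) * v\<^sup>2" for u v :: real
  proof -
    have "t * u\<^sup>2 + (1 - t) * v\<^sup>2 - (t * u + (1 - t) * v)\<^sup>2 = t * (1 - t) * (u - v)\<^sup>2"
      by (simp add: power2_eq_square algebra_simps)
    moreover have "t * (1 - t) * (u - v)\<^sup>2 \<ge> 0"
      using t by simp
    ultimately show ?thesis
      by linarith
  qed
  have "P3_obj K m (\<lambda>a i. t * e1 a i + (1 - t) * e2 a i)
      \<le> (\<Sum>a\<in>{1..K}. \<Sum>i<m a. t * (e1 a i)\<^sup>2 + (1 - t) * (e2 a i)\<^sup>2)"
    unfolding P3_obj_def by (intro sum_mono square_comb)
  also have "\<dots> = t * P3_obj K m e1 + (1 - t) * P3_obj K m e2"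
    unfolding P3_obj_def by (simp add: sum.distrib sum_distrib_left)
  finally show ?thesis .
qed

lemma Phi_shift_tendsto_zero:
  assumes "c > 0"
  shows "((\<lambda>L. Phi ((b - L) / c)) \<longlongrightarrow> 0) at_top"
proof -
  have "filterlim (\<lambda>L. (b - L) / c) at_bot at_top"
    using assms by real_asymp
  then show ?thesis
    by (rule filterlim_compose[OF Phi_tendsto_at_bot])
qed

lemma P3_feasible_exists:
  assumes "\<sigma> > 0" and "\<delta> > 0" and astar: "astar \<in> {1..K}" and m: "\<forall>a\<in>{1..K}. m a \<ge> 1"
  shows "\<exists>eps. P3_feasible K astar \<sigma> \<delta> m y eps"
proof -
  let ?A = "{1..K} - {astar}"
  let ?c = "\<lambda>a. \<sigma> ^ 3 * sqrt (1 / real (m a) + 1 / real (m astar))"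
  define gap0 where "gap0 a = mu_tilde m y (\<lambda>_ _. 0) a - mu_tilde m y (\<lambda>_ _. 0) astar" for a
  define shift where "shift L = (\<lambda>a (i::nat). if a = astar then L else 0)" for L :: real
  have m_pos: "m a > 0" if "a \<in> {1..K}" for a
    using m that by fastforce
  have c: "?c a > 0" for a
    using \<open>\<sigma> > 0\<close> m_pos[OF astar] by (rule P3_scale_pos)
  have mu_shift: "mu_tilde m y (shift L) a = mu_tilde m y (\<lambda>_ _. 0) a + (if a = astar then L else 0)"
    if "a \<in> {1..K}" for a L
    using mu_tilde_shift[of m a y "\<lambda>_ _. 0" "\<lambda>a. if a = astar then L else 0"] m_pos[OF that]
    by (simp add: shift_def)
  have gap_shift: "mu_tilde m y (shift L) a - mu_tilde m y (shift L) astar = gap0 a - L"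
    if "a \<in> ?A" for a L
    using that astar by (simp add: mu_shift gap0_def)
  have "((\<lambda>L. \<Sum>a\<in>?A. Phi ((gap0 a - L) / ?c a)) \<longlongrightarrow> (\<Sum>a\<in>?A. 0)) at_top"
    by (intro tendsto_sum Phi_shift_tendsto_zero c)
  then have "eventually (\<lambda>L. (\<Sum>a\<in>?A. Phi ((gap0 a - L) / ?c a)) < \<delta>) at_top"
    using \<open>\<delta> > 0\<close> by (intro order_tendstoD) simp_all
  moreover have "eventually (\<lambda>L. \<forall>a\<in>?A. gap0 a \<le> L) at_top"
    by (intro eventually_ball_finite ballI eventually_ge_at_top) simp
  ultimately obtain L where "(\<Sum>a\<in>?A. Phi ((gap0 a - L) / ?c a)) < \<delta>" "\<forall>a\<in>?A. gap0 a \<le> L"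
    using eventually_happens'[OF trivial_limit_at_top_linorder eventually_conj] by blast
  then have "P3_feasible K astar \<sigma> \<delta> m y (shift L)"
    unfolding P3_feasible_def by (simp add: gap_shift)
  then show ?thesis
    by blast
qed

lemma closed_P3_feasible: "closed {e. P3_feasible K astar \<sigma> \<delta> m y e}"
proof -
  have "{e. P3_feasible K astar \<sigma> \<delta> m y e} =
      {e. (\<Sum>a\<in>{1..K} - {astar}. Phi ((mu_tilde m y e a - mu_tilde m y e astar)
             * inverse (\<sigma> ^ 3 * sqrt (1 / real (m a) + 1 / real (m astar))))) \<le> \<delta>}
      \<inter> (\<Inter>a\<in>{1..K} - {astar}. {e. mu_tilde m y e a - mu_tilde m y e astar \<le> 0})"
    unfolding P3_feasible_def divide_inverse by auto
  also have "closed \<dots>"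
    unfolding mu_tilde_def divide_inverse
    by (intro closed_Int closed_INT ballI closed_Collect_le continuous_intros)
  finally show ?thesis .
qed

lemma P3_obj_eq_sum_Sigma: "P3_obj K m e = (\<Sum>(a, i)\<in>Sigma {1..K} (\<lambda>a. {..<m a}). (e a i)\<^sup>2)"
  unfolding P3_obj_def by (simp add: sum.Sigma)

lemma P3_optimal_exists:
  assumes astar: "astar \<in> {1..K}" and feasible: "P3_feasible K astar \<sigma> \<delta> m y e0"
  shows "\<exists>eps. P3_optimal K astar \<sigma> \<delta> m y eps"
proof -
  define D where "D = Sigma {1..K} (\<lambda>a. {..<m a})"
  define restr where "restr e = (\<lambda>a i. if (a, i) \<in> D then e a i else 0)" for e :: "nat \<Rightarrow> nat \<Rightarrow> real"
  have mu_restr: "mu_tilde m y (restr e) a = mu_tilde m y e a" if "a \<in> {1..K}" for e a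
    using that unfolding mu_tilde_def restr_def D_def by (intro arg_cong2[where f = "(/)"] sum.cong) auto
  have feasible_restr: "P3_feasible K astar \<sigma> \<delta> m y (restr e) = P3_feasible K astar \<sigma> \<delta> m y e" for e
    unfolding P3_feasible_def using astar by (simp add: mu_restr)
  define S where "S = {e. P3_feasible K astar \<sigma> \<delta> m y e \<and> (\<forall>a i. (a, i) \<notin> D \<longrightarrow> e a i = 0)}"
  have "S = {e. P3_feasible K astar \<sigma> \<delta> m y e} \<inter> (\<Inter>p\<in>-D. {e. e (fst p) (snd p) = 0})"
    unfolding S_def by auto (metis ComplI fst_conv snd_conv)
  also have "closed \<dots>"
    by (intro closed_Int closed_P3_feasible closed_INT ballI closed_Collect_eq continuous_on_apply2
        continuous_on_const)
  finally have "closed S" .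
  moreover have "restr e0 \<in> S"
    unfolding S_def using feasible feasible_restr[of e0] by (simp add: restr_def)
  moreover have "finite D"
    unfolding D_def by simp
  ultimately obtain e where e: "e \<in> S"
    and min: "\<And>e'. e' \<in> S \<Longrightarrow> (\<Sum>(a, i)\<in>D. (e a i)\<^sup>2) \<le> (\<Sum>(a, i)\<in>D. (e' a i)\<^sup>2)"
    using sum_squares_attains_min[of S D] unfolding S_def by blast
  have "P3_obj K m e \<le> P3_obj K m e'" if "P3_feasible K astar \<sigma> \<delta> m y e'" for e'
  proof -
    have "restr e' \<in> S"
      unfolding S_def using that feasible_restr[of e'] by (simp add: restr_def)
    have "P3_obj K m e = (\<Sum>(a, i)\<in>D. (e a i)\<^sup>2)"
      unfolding P3_obj_eq_sum_Sigma D_def ..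
    also have "\<dots> \<le> (\<Sum>(a, i)\<in>D. (restr e' a i)\<^sup>2)"
      using min[OF \<open>restr e' \<in> S\<close>] .
    also have "\<dots> = (\<Sum>(a, i)\<in>D. (e' a i)\<^sup>2)"
      unfolding restr_def by (intro sum.cong) auto
    also have "\<dots> = P3_obj K m e'"
      unfolding P3_obj_eq_sum_Sigma D_def ..
    finally show ?thesis .
  qed
  then have "P3_optimal K astar \<sigma> \<delta> m y e"
    using e unfolding P3_optimal_def S_def by blast
  then show ?thesis
    by blast
qed

lemma TS_standardized_gap_eq:
  fixes \<sigma> p q u v :: real
  assumes "\<sigma> > 0" and "p > 0" and "q > 0"
  shows "(u / \<sigma>\<^sup>2 - v / \<sigma>\<^sup>2) / sqrt ((sqrt (\<sigma>\<^sup>2 / p))\<^sup>2 + (sqrt (\<sigma>\<^sup>2 / q))\<^sup>2)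
       = (u - v) / (\<sigma> ^ 3 * sqrt (1 / p + 1 / q))"
proof -
  have "(sqrt (\<sigma>\<^sup>2 / p))\<^sup>2 + (sqrt (\<sigma>\<^sup>2 / q))\<^sup>2 = \<sigma>\<^sup>2 * (1 / p + 1 / q)"
    using assms by (simp add: field_simps)
  then have "sqrt ((sqrt (\<sigma>\<^sup>2 / p))\<^sup>2 + (sqrt (\<sigma>\<^sup>2 / q))\<^sup>2) = \<sigma> * sqrt (1 / p + 1 / q)"
    using assms by (simp add: real_sqrt_mult)
  moreover have "sqrt (1 / p + 1 / q) > 0"
    using assms by (intro real_sqrt_gt_zero add_pos_pos) auto
  ultimately show ?thesis
    using assms by (simp add: field_simps power3_eq_cube power2_eq_square)
qed

lemma TS_pulls_prob_ge:
  assumes "\<sigma> > 0" and astar: "astar \<in> {1..K}" and m: "\<forall>a\<in>{1..K}. m a \<ge> 1"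
    and feasible: "P3_feasible K astar \<sigma> \<delta> m y eps"
  shows "prob_space (TS_sample K \<sigma> m y eps)"
    and "1 - \<delta> \<le> measure (TS_sample K \<sigma> m y eps) (TS_pulls K astar \<inter> space (TS_sample K \<sigma> m y eps))"
proof -
  let ?A = "{1..K} - {astar}"
  let ?mu = "\<lambda>a. mu_tilde m y eps a / \<sigma>\<^sup>2"
  let ?s = "\<lambda>a. sqrt (\<sigma>\<^sup>2 / real (m a))"
  have m_pos: "real (m a) > 0" if "a \<in> {1..K}" for a
    using m that by fastforce
  have s_pos: "?s a > 0" if "a \<in> {1..K}" for a
    using m_pos[OF that] \<open>\<sigma> > 0\<close> by simp
  have sample: "TS_sample K \<sigma> m y eps = PiM {1..K} (\<lambda>a. density lborel (normal_density (?mu a) (?s a)))"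
    unfolding TS_sample_def ..
  show "prob_space (TS_sample K \<sigma> m y eps)"
    unfolding sample using s_pos astar by (intro measure_PiM_normal_argmax_ge(1)) auto
  have "(\<Sum>a\<in>?A. Phi ((?mu a - ?mu astar) / sqrt ((?s a)\<^sup>2 + (?s astar)\<^sup>2)))
      = (\<Sum>a\<in>?A. Phi ((mu_tilde m y eps a - mu_tilde m y eps astar)
             / (\<sigma> ^ 3 * sqrt (1 / real (m a) + 1 / real (m astar)))))"
    using \<open>\<sigma> > 0\<close> m_pos astar by (intro sum.cong refl arg_cong[where f = Phi] TS_standardized_gap_eq) auto
  also have "\<dots> \<le> \<delta>"
    using feasible unfolding P3_feasible_def by simp
  finally show "1 - \<delta> \<le> measure (TS_sample K \<sigma> m y eps) (TS_pulls K astar \<inter> space (TS_sample K \<sigma> m y eps))"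
    using measure_PiM_normal_argmax_ge(2)[of "{1..K}" ?s astar ?mu] s_pos astar
    unfolding sample TS_pulls_def by fastforce
qed

theorem theorem3:
  fixes K astar :: nat and \<sigma> \<delta> :: real and m :: "nat \<Rightarrow> nat" and y :: "nat \<Rightarrow> nat \<Rightarrow> real"
  assumes "K \<ge> 2" and "astar \<in> {1..K}" and "\<sigma> > 0" and "\<delta> > 0"
    and "\<forall>a\<in>{1..K}. m a \<ge> 1"
  shows
    "(\<forall>e1 e2 (t::real). P3_feasible K astar \<sigma> \<delta> m y e1 \<and> P3_feasible K astar \<sigma> \<delta> m y e2
        \<and> 0 \<le> t \<and> t \<le> 1 \<longrightarrow>
        P3_feasible K astar \<sigma> \<delta> m y (\<lambda>a i. t * e1 a i + (1 - t) * e2 a i))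
   \<and> (\<forall>e1 e2 (t::real). 0 \<le> t \<and> t \<le> 1 \<longrightarrow>
        P3_obj K m (\<lambda>a i. t * e1 a i + (1 - t) * e2 a i)
          \<le> t * P3_obj K m e1 + (1 - t) * P3_obj K m e2)
   \<and> (\<exists>eps. P3_optimal K astar \<sigma> \<delta> m y eps)
   \<and> (\<forall>eps. P3_optimal K astar \<sigma> \<delta> m y eps \<longrightarrow>
        prob_space (TS_sample K \<sigma> m y eps) \<and>
        measure (TS_sample K \<sigma> m y eps) (TS_pulls K astar \<inter> space (TS_sample K \<sigma> m y eps))
          \<ge> 1 - \<delta>)"
proof (intro conjI allI impI)
  have "m astar > 0"
    using assms(2,5) by fastforce
  then show "P3_feasible K astar \<sigma> \<delta> m y (\<lambda>a i. t * e1 a i + (1 - t) * e2 a i)"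
    if "P3_feasible K astar \<sigma> \<delta> m y e1 \<and> P3_feasible K astar \<sigma> \<delta> m y e2 \<and> 0 \<le> t \<and> t \<le> 1"
    for e1 e2 and t :: real
    using that \<open>\<sigma> > 0\<close> by (intro P3_feasible_convex) auto
  show "P3_obj K m (\<lambda>a i. t * e1 a i + (1 - t) * e2 a i) \<le> t * P3_obj K m e1 + (1 - t) * P3_obj K m e2"
    if "0 \<le> t \<and> t \<le> 1" for e1 e2 and t :: real
    using that by (intro P3_obj_convex) auto
  show "\<exists>eps. P3_optimal K astar \<sigma> \<delta> m y eps"
    using P3_feasible_exists[OF assms(3,4,2,5)] P3_optimal_exists[OF assms(2)] by blast
  show "prob_space (TS_sample K \<sigma> m y eps)"
    and "1 - \<delta> \<le> measure (TS_sample K \<sigma> m y eps) (TS_pulls K astar \<inter> space (TS_sample K \<sigma> m y eps))"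
    if "P3_optimal K astar \<sigma> \<delta> m y eps" for eps
    using TS_pulls_prob_ge[OF assms(3,2,5)] that unfolding P3_optimal_def by blast+
qed

end
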